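(* For any integers $x_1\ge x_2\ge1$ and any $n\ge0$, \[ p_n(x_1,x_2)\ge p_n(x_1+1,x_2-1),\qquad q_n(x_1,x_2)\ge q_n(x_1+1,x_2-1). \]
   Context: Here $p_k,q_k:\mathbf N^2\to\mathbf N$ ($\mathbf N$ the non-negative integers) are defined by the generating functions $\sum_{\mathbf x\in\mathbf N^2}\sum_{k\ge0}p_k(\mathbf x)t^{\mathbf x}u^k=\prod_{\mathbf x\in\mathbf N^2}(1-t^{\mathbf x}u)^{-1}$ and $\sum_{\mathbf x\in\mathbf N^2}\sum_{k\ge0}q_k(\mathbf x)t^{\mathbf x}u^k=\prod_{\mathbf x\in\mathbf N^2}(1+t^{\mathbf x}u)$, where $t^{(a,b)}=t_1^at_2^b$. Equivalently, $p_k(\mathbf x)$ is the number of vector partitions of $\mathbf x$ (unordered decompositions $\mathbf x=\mathbf x_1+\dots+\mathbf x_j$ with $\mathbf x_i\in\mathbf N^2\setminus\{\mathbf 0\}$) with at most $k$ parts, and $q_k(\mathbf x)$ is the number of vector partitions of $\mathbf x$ into exactly $k$ or $k-1$ distinct parts. *)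

theory Defs
  imports Main "HOL-Library.Multiset"
begin

text \<open>Vector partitions of a vector in N^2: unordered decompositions into
  nonzero parts, i.e. multisets of nonzero vectors whose componentwise sum is the vector.\<close>

definition vsum_mset :: "(nat \<times> nat) multiset \<Rightarrow> nat \<times> nat" where
  "vsum_mset M = (sum_mset (image_mset fst M), sum_mset (image_mset snd M))"

definition vsum_set :: "(nat \<times> nat) set \<Rightarrow> nat \<times> nat" where
  "vsum_set S = (\<Sum>v\<in>S. fst v, \<Sum>v\<in>S. snd v)"

definition p :: "nat \<Rightarrow> nat \<times> nat \<Rightarrow> nat" where
  "p k x = card {M. (0,0) \<notin># M \<and> vsum_mset M = x \<and> size M \<le> k}"

definition q :: "nat \<Rightarrow> nat \<times> nat \<Rightarrow> nat" where
  "q k x = card {S. finite S \<and> (0,0) \<notin> S \<and> vsum_set S = x \<and> (card S = k \<or> card S + 1 = k)}"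

end

theory Submission
  imports Defs Complex_Main "HOL-Library.Function_Algebras" "HOL-Library.Product_Plus" "HOL-Library.Indicator_Function"
begin

text \<open>
  Functions on vector partitions carry an action of sl2. The operators E and F evaluate a
  function at the partitions obtained by moving one unit of one part from the first to the
  second coordinate, respectively back, with coefficients chosen so that [E, F] multiplies a
  function supported on partitions of x by the weight fst x - snd x. Since E raises the weight
  by 2 and preserves fst x + snd x, iterating E on a function of weight h eventually gives 0,
  and the identity F E^(k+1) G = -(k+1)(h+k) E^k G, valid when F G = 0, then shows that F is
  injective on functions of positive weight h. F sends functions on partitions of (a + 1, b)
  to functions on partitions of (a, b + 1) with the same number of parts, so comparing
  dimensions gives the inequalities whenever b \<le> a. For distinct parts the same works with
  the moves that would repeat a part left out.
\<close>

section \<open>Real-valued functions as a real vector space\<close>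

instantiation "fun" :: (type, real_vector) real_vector
begin

definition scaleR_fun :: "real \<Rightarrow> ('a \<Rightarrow> 'b) \<Rightarrow> 'a \<Rightarrow> 'b"
  where "scaleR_fun c f = (\<lambda>x. c *\<^sub>R f x)"

instance
  by standard (simp_all add: scaleR_fun_def fun_eq_iff scaleR_add_right scaleR_add_left)

end

lemma scaleR_fun_apply [simp]: "(c *\<^sub>R f) x = c *\<^sub>R f x"
  by (simp add: scaleR_fun_def)

lemma sum_fun_apply: "(\<Sum>a\<in>A. f a) x = (\<Sum>a\<in>A. f a x)"
  by (induction A rule: infinite_finite_induct) auto

lemma subspace_supported: "subspace {G :: 'a \<Rightarrow> real. {s. G s \<noteq> 0} \<subseteq> A}"
  by (auto simp: subspace_def subset_iff) (metis add_0)

lemma span_indicators: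
  assumes "finite A"
  shows "span ((\<lambda>a. indicator {a}) ` A) = {G :: 'a \<Rightarrow> real. {s. G s \<noteq> 0} \<subseteq> A}"
    (is "span ?D = ?V")
proof
  show "span ?D \<subseteq> ?V"
    by (rule span_minimal[OF _ subspace_supported]) (auto simp: indicator_def)
next
  show "?V \<subseteq> span ?D"
  proof
    fix G assume "G \<in> ?V"
    then have "G = (\<Sum>a\<in>A. G a *\<^sub>R indicator {a})"
      using assms by (auto simp: fun_eq_iff sum_fun_apply indicator_def Int_insert_right)
    also have "\<dots> \<in> span ?D"
      by (intro span_sum span_scale span_base) auto
    finally show "G \<in> span ?D" .
  qed
qed

lemma inj_indicator_singleton: "inj (\<lambda>a. indicator {a} :: 'a \<Rightarrow> real)"
proof (rule injI)
  fix a b :: 'a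
  assume "indicator {a} = (indicator {b} :: 'a \<Rightarrow> real)"
  then have "indicator {a} a = (indicator {b} a :: real)"
    by simp
  then show "a = b"
    by (simp add: indicator_def split: if_splits)
qed

lemma independent_indicators:
  assumes "finite A"
  shows "independent ((\<lambda>a. indicator {a} :: 'a \<Rightarrow> real) ` A)"
proof (rule independent_if_scalars_zero)
  let ?\<delta> = "\<lambda>a. indicator {a} :: 'a \<Rightarrow> real"
  show "finite (?\<delta> ` A)"
    using assms by simp
  fix c v
  assume zero: "(\<Sum>v\<in>?\<delta> ` A. c v *\<^sub>R v) = 0" and "v \<in> ?\<delta> ` A"
  then obtain a where a: "a \<in> A" "v = ?\<delta> a"
    by blast
  have "(\<Sum>b\<in>A. c (?\<delta> b) *\<^sub>R ?\<delta> b) = 0"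
    using zero by (simp add: sum.reindex inj_on_subset[OF inj_indicator_singleton])
  then have "0 = (\<Sum>b\<in>A. c (?\<delta> b) *\<^sub>R ?\<delta> b) a"
    by simp
  also have "\<dots> = c v"
    using assms a by (simp add: sum_fun_apply indicator_def Int_insert_right)
  finally show "c v = 0" ..
qed

lemma card_le_card_if_linear_injective:
  fixes L :: "('a \<Rightarrow> real) \<Rightarrow> 'b \<Rightarrow> real"
  assumes "finite A" "finite B" "linear L"
    and maps: "\<And>G. {s. G s \<noteq> 0} \<subseteq> A \<Longrightarrow> {s. L G s \<noteq> 0} \<subseteq> B"
    and injective: "\<And>G. {s. G s \<noteq> 0} \<subseteq> A \<Longrightarrow> L G = 0 \<Longrightarrow> G = 0"
  shows "card A \<le> card B"
proof -
  let ?\<delta> = "\<lambda>a. indicator {a} :: 'a \<Rightarrow> real" and ?\<delta>' = "\<lambda>b. indicator {b} :: 'b \<Rightarrow> real"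
  have inj_span: "inj_on L (span (?\<delta> ` A))"
    using injective
    by (simp add: span_indicators \<open>finite A\<close> linear_inj_on_iff_eq_0[OF \<open>linear L\<close> subspace_supported])
  then have "independent (L ` ?\<delta> ` A)"
    by (rule linear_independent_injective_image[OF \<open>linear L\<close> independent_indicators[OF \<open>finite A\<close>]])
  moreover have "L ` ?\<delta> ` A \<subseteq> span (?\<delta>' ` B)"
  proof (rule image_subsetI)
    fix G assume "G \<in> ?\<delta> ` A"
    then have "{s. G s \<noteq> 0} \<subseteq> A"
      by (auto simp: indicator_def)
    then show "L G \<in> span (?\<delta>' ` B)"
      using maps by (simp add: span_indicators \<open>finite B\<close>)
  qed
  ultimately have "card (L ` ?\<delta> ` A) \<le> card (?\<delta>' ` B)"
    using independent_span_bound \<open>finite B\<close> by blast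
  have "inj_on (L \<circ> ?\<delta>) A"
    by (rule comp_inj_on[OF inj_on_subset[OF inj_indicator_singleton subset_UNIV]
          inj_on_subset[OF inj_span span_superset]])
  then have "card A = card (L ` ?\<delta> ` A)"
    by (metis card_image image_comp)
  also have "\<dots> \<le> card (?\<delta>' ` B)"
    by fact
  also have "\<dots> \<le> card B"
    by (rule card_image_le[OF \<open>finite B\<close>])
  finally show ?thesis .
qed

section \<open>Lowering operators of sl2 on positive weights\<close>

lemma raising_power_weight:
  fixes E :: "('s \<Rightarrow> real) \<Rightarrow> 's \<Rightarrow> real" and wt deg :: "'s \<Rightarrow> int"
  assumes raising: "\<And>G s. E G s \<noteq> 0 \<Longrightarrow> \<exists>s'. G s' \<noteq> 0 \<and> wt s = wt s' + 2 \<and> deg s = deg s'"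
    and support: "\<And>s. G s \<noteq> 0 \<Longrightarrow> wt s = h \<and> deg s = N"
  shows "(E ^^ k) G s \<noteq> 0 \<Longrightarrow> wt s = h + 2 * int k \<and> deg s = N"
proof (induction k arbitrary: s)
  case 0
  then show ?case
    using support by simp
next
  case (Suc k)
  then obtain s' where "(E ^^ k) G s' \<noteq> 0" "wt s = wt s' + 2" "deg s = deg s'"
    using raising by fastforce
  then show ?case
    using Suc.IH by simp
qed

lemma lowering_raising_power:
  fixes E F :: "('s \<Rightarrow> real) \<Rightarrow> 's \<Rightarrow> real" and wt :: "'s \<Rightarrow> int"
  assumes "linear E"
    and commutator: "\<And>G. E (F G) - F (E G) = (\<lambda>s. of_int (wt s) * G s)"
    and weight: "\<And>k s. (E ^^ k) G s \<noteq> 0 \<Longrightarrow> wt s = h + 2 * int k"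
    and "F G = 0"
  shows "F ((E ^^ Suc k) G) = - (real (Suc k) * (of_int h + real k)) *\<^sub>R (E ^^ k) G"
proof -
  have weight_scale: "(\<lambda>s. of_int (wt s) * (E ^^ k) G s) = of_int (h + 2 * int k) *\<^sub>R (E ^^ k) G"
    for k
    using weight[of k] by (force simp: fun_eq_iff)
  show ?thesis
  proof (induction k)
    case 0
    have "F (E G) = E (F G) - (\<lambda>s. of_int (wt s) * G s)"
      using commutator[of G] by (simp add: algebra_simps)
    then show ?case
      using weight_scale[of 0] \<open>F G = 0\<close> linear_0[OF \<open>linear E\<close>] by simp
  next
    case (Suc k)
    let ?X = "(E ^^ Suc k) G"
    have "F ((E ^^ Suc (Suc k)) G) = E (F ?X) - (\<lambda>s. of_int (wt s) * ?X s)"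
      using commutator[of ?X] by (simp add: algebra_simps)
    also have "\<dots> = E (- (real (Suc k) * (of_int h + real k)) *\<^sub>R (E ^^ k) G)
        - of_int (h + 2 * int (Suc k)) *\<^sub>R ?X"
      by (simp only: Suc.IH weight_scale)
    also have "\<dots> = - (real (Suc k) * (of_int h + real k)) *\<^sub>R ?X - of_int (h + 2 * int (Suc k)) *\<^sub>R ?X"
      by (simp add: linear_scale[OF \<open>linear E\<close>] linear_neg[OF \<open>linear E\<close>])
    also have "\<dots> = (- (real (Suc k) * (of_int h + real k)) - of_int (h + 2 * int (Suc k))) *\<^sub>R ?X"
      by (simp only: scaleR_diff_left)
    also have "\<dots> = - (real (Suc (Suc k)) * (of_int h + real (Suc k))) *\<^sub>R ?X"
      by (rule arg_cong[where f = "\<lambda>c. c *\<^sub>R ?X"]) (simp add: algebra_simps)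
    finally show ?case .
  qed
qed

lemma lowering_injective_on_positive_weight:
  fixes E F :: "('s \<Rightarrow> real) \<Rightarrow> 's \<Rightarrow> real" and wt deg :: "'s \<Rightarrow> int"
  assumes "linear E" "linear F"
    and commutator: "\<And>G. E (F G) - F (E G) = (\<lambda>s. of_int (wt s) * G s)"
    and raising: "\<And>G s. E G s \<noteq> 0 \<Longrightarrow> \<exists>s'. G s' \<noteq> 0 \<and> wt s = wt s' + 2 \<and> deg s = deg s'"
    and weight_le_degree: "\<And>s. wt s \<le> deg s"
    and support: "\<And>s. G s \<noteq> 0 \<Longrightarrow> wt s = h \<and> deg s = N"
    and "0 < h" and "F G = 0"
  shows "G = 0"
proof -
  have weight: "(E ^^ k) G s \<noteq> 0 \<Longrightarrow> wt s = h + 2 * int k \<and> deg s = N" for k s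
    using raising_power_weight[OF raising support] .
  have top: "(E ^^ nat N) G = 0"
  proof (rule ccontr)
    assume "(E ^^ nat N) G \<noteq> 0"
    then obtain s where "(E ^^ nat N) G s \<noteq> 0"
      by (auto simp: fun_eq_iff)
    then have "wt s = h + 2 * int (nat N)" "deg s = N"
      using weight by blast+
    moreover have "N \<le> int (nat N)" "0 \<le> int (nat N)"
      by simp_all
    ultimately show False
      using weight_le_degree[of s] \<open>0 < h\<close> by linarith
  qed
  have "(E ^^ m) G = 0" if "m \<le> nat N" for m
    using that
  proof (induction rule: inc_induct)
    case base
    show ?case
      by (fact top)
  next
    case (step m)
    have "0 = F ((E ^^ Suc m) G)"
      by (simp only: step.IH linear_0[OF \<open>linear F\<close>])
    also have "\<dots> = - (real (Suc m) * (of_int h + real m)) *\<^sub>R (E ^^ m) G"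
      by (rule lowering_raising_power[OF \<open>linear E\<close> commutator weight[THEN conjunct1] \<open>F G = 0\<close>])
    moreover have "0 < real (Suc m) * (of_int h + real m)"
      using \<open>0 < h\<close> by (intro mult_pos_pos) auto
    ultimately show ?case
      by (metis scaleR_eq_0_iff neg_equal_0_iff_equal less_irrefl)
  qed
  from this[of 0] show "G = 0"
    by simp
qed

section \<open>Moving one element of a multiset\<close>

lemma sum_mset_subtractf:
  fixes f g :: "'a \<Rightarrow> 'b::ab_group_add"
  shows "(\<Sum>x\<in>#M. f x - g x) = (\<Sum>x\<in>#M. f x) - (\<Sum>x\<in>#M. g x)"
  by (induction M) auto

lemma sum_mset_remove:
  "x \<in># M \<Longrightarrow> (\<Sum>y\<in>#M. g y) = g x + (\<Sum>y\<in>#M - {#x#}. g y)"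
  by (metis insert_DiffM sum_mset.insert)

lemma sum_mset_offdiag_swap:
  fixes \<Phi> :: "'a \<Rightarrow> 'a \<Rightarrow> 'b::ab_group_add"
  shows "(\<Sum>u\<in>#M. \<Sum>w\<in>#M - {#u#}. \<Phi> u w) = (\<Sum>w\<in>#M. \<Sum>u\<in>#M - {#w#}. \<Phi> u w)"
proof -
  have offdiag: "(\<Sum>u\<in>#M. \<Sum>w\<in>#M - {#u#}. \<Psi> u w) = (\<Sum>u\<in>#M. \<Sum>w\<in>#M. \<Psi> u w) - (\<Sum>u\<in>#M. \<Psi> u u)"
    for \<Psi> :: "'a \<Rightarrow> 'a \<Rightarrow> 'b"
  proof -
    have "(\<Sum>u\<in>#M. \<Sum>w\<in>#M - {#u#}. \<Psi> u w) = (\<Sum>u\<in>#M. (\<Sum>w\<in>#M. \<Psi> u w) - \<Psi> u u)"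
      by (rule arg_cong[where f = sum_mset], rule image_mset_cong) (simp add: sum_mset_remove)
    then show ?thesis
      by (simp add: sum_mset_subtractf)
  qed
  show ?thesis
    using offdiag[of \<Phi>] offdiag[of "\<lambda>w u. \<Phi> u w"] sum_mset.swap[of \<Phi> M M] by simp
qed

lemma sum_mset_add_mset_remove:
  "(\<Sum>v\<in>#add_mset x N. \<phi> v (add_mset x N - {#v#})) = \<phi> x N + (\<Sum>v\<in>#N. \<phi> v (add_mset x (N - {#v#})))"
proof -
  have "add_mset x N - {#v#} = add_mset x (N - {#v#})" if "v \<in># N" for v
    using that by (metis add_mset_commute add_mset_remove_trivial insert_DiffM)
  then show ?thesis
    by (simp cong: image_mset_cong)
qed

lemma sum_mset_replace: "v \<in># M \<Longrightarrow> \<Sum>\<^sub># (add_mset w (M - {#v#})) + v = \<Sum>\<^sub># M + w"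
  by (metis add.commute add.left_commute insert_DiffM sum_mset.add_mset)

definition mset_move :: "('a \<Rightarrow> real) \<Rightarrow> ('a \<Rightarrow> 'a) \<Rightarrow> ('a multiset \<Rightarrow> real) \<Rightarrow> 'a multiset \<Rightarrow> real"
  where "mset_move c f G M = (\<Sum>v\<in>#M. c v * G (add_mset (f v) (M - {#v#})))"

lemma linear_mset_move: "linear (mset_move c f)"
  by (rule linearI)
    (simp_all add: mset_move_def fun_eq_iff distrib_left sum_mset.distrib sum_mset_distrib_left mult.left_commute)

lemma mset_move_nonzero:
  assumes "mset_move c f G M \<noteq> 0"
  obtains v where "v \<in># M" "c v \<noteq> 0" "G (add_mset (f v) (M - {#v#})) \<noteq> 0"
proof -
  have "\<exists>v\<in>#M. c v * G (add_mset (f v) (M - {#v#})) \<noteq> 0"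
  proof (rule ccontr)
    assume "\<not> ?thesis"
    then have "mset_move c f G M = (\<Sum>v\<in>#M. 0)"
      unfolding mset_move_def by (intro arg_cong[where f = sum_mset] image_mset_cong) auto
    with assms show False
      by simp
  qed
  then show thesis
    using that by auto
qed

lemma mset_move_add_mset:
  "mset_move c f G (add_mset x N) =
    c x * G (add_mset (f x) N) + (\<Sum>v\<in>#N. c v * G (add_mset (f v) (add_mset x (N - {#v#}))))"
  unfolding mset_move_def by (rule sum_mset_add_mset_remove)

lemma mset_move_mset_move:
  assumes "\<And>u. a u \<noteq> 0 \<Longrightarrow> g (f u) = u"
  shows "mset_move a f (mset_move b g G) M =
    (\<Sum>u\<in>#M. a u * b (f u)) * G M +
    (\<Sum>u\<in>#M. \<Sum>w\<in>#M - {#u#}. a u * b w * G (add_mset (f u) (add_mset (g w) (M - {#u#} - {#w#}))))"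
proof -
  have "a u * mset_move b g G (add_mset (f u) (M - {#u#})) =
      a u * b (f u) * G M + (\<Sum>w\<in>#M - {#u#}. a u * b w * G (add_mset (f u) (add_mset (g w) (M - {#u#} - {#w#}))))"
    if "u \<in># M" for u
  proof (cases "a u = 0")
    case False
    then show ?thesis
      using that assms[OF False]
      by (simp add: mset_move_add_mset sum_mset_distrib_left algebra_simps add_mset_commute)
  qed simp
  then show ?thesis
    unfolding mset_move_def[of a] by (simp add: sum_mset.distrib sum_mset_distrib_right cong: image_mset_cong)
qed

lemma mset_move_commutator:
  assumes "\<And>u. a u \<noteq> 0 \<Longrightarrow> g (f u) = u" and "\<And>w. b w \<noteq> 0 \<Longrightarrow> f (g w) = w"
  shows "mset_move a f (mset_move b g G) M - mset_move b g (mset_move a f G) M =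
    (\<Sum>u\<in>#M. a u * b (f u) - b u * a (g u)) * G M"
proof -
  let ?\<Phi> = "\<lambda>u w. a u * b w * G (add_mset (f u) (add_mset (g w) (M - {#u#} - {#w#})))"
  have "(\<Sum>w\<in>#M. \<Sum>u\<in>#M - {#w#}. b w * a u * G (add_mset (g w) (add_mset (f u) (M - {#w#} - {#u#})))) =
      (\<Sum>w\<in>#M. \<Sum>u\<in>#M - {#w#}. ?\<Phi> u w)"
    by (simp add: add_mset_commute diff_right_commute mult.commute)
  then show ?thesis
    using mset_move_mset_move[of a g f b G M] mset_move_mset_move[of b f g a G M] assms
      sum_mset_offdiag_swap[of ?\<Phi> M]
    by (simp add: sum_mset_subtractf left_diff_distrib)
qed

section \<open>Moving one element of a set\<close>

lemma sum_offdiag_swap: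
  assumes "finite S"
  shows "(\<Sum>u\<in>S. \<Sum>w\<in>S - {u}. \<Phi> u w) = (\<Sum>w\<in>S. \<Sum>u\<in>S - {w}. \<Phi> u w)"
proof -
  have "S - {x} = {y\<in>S. x \<noteq> y}" "S - {x} = {y\<in>S. y \<noteq> x}" for x
    by auto
  then show ?thesis
    using sum.swap_restrict[OF assms assms, of \<Phi> "\<lambda>u w. u \<noteq> w"] by simp
qed

lemma sum_unmatched_diff:
  fixes a b :: "'a \<Rightarrow> 'b::comm_ring"
  assumes "finite S"
    and "\<And>u. a u * b (f u) \<noteq> 0 \<Longrightarrow> g (f u) = u"
    and "\<And>w. b w * a (g w) \<noteq> 0 \<Longrightarrow> f (g w) = w"
  shows "(\<Sum>u\<in>S. if f u \<in> S then 0 else a u * b (f u)) - (\<Sum>w\<in>S. if g w \<in> S then 0 else b w * a (g w)) =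
    (\<Sum>u\<in>S. a u * b (f u) - b u * a (g u))"
proof -
  let ?P = "{u\<in>S. f u \<in> S \<and> a u * b (f u) \<noteq> 0}" and ?Q = "{w\<in>S. g w \<in> S \<and> b w * a (g w) \<noteq> 0}"
  have split: "(\<Sum>x\<in>S. \<phi> x) = (\<Sum>x\<in>S. if h x \<in> S then 0 else \<phi> x) + (\<Sum>x\<in>{x\<in>S. h x \<in> S \<and> \<phi> x \<noteq> 0}. \<phi> x)"
    for \<phi> :: "'a \<Rightarrow> 'b" and h
    unfolding sum.inter_filter[OF \<open>finite S\<close>] sum.distrib[symmetric] by (rule sum.cong) auto
  have "(\<Sum>u\<in>?P. a u * b (f u)) = (\<Sum>w\<in>?Q. b w * a (g w))"
    by (rule sum.reindex_bij_witness[where i = g and j = f]) (use assms in \<open>auto simp: mult.commute\<close>)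
  then show ?thesis
    using split[of "\<lambda>u. a u * b (f u)" f] split[of "\<lambda>w. b w * a (g w)" g] by (simp add: sum_subtractf)
qed

lemma sum_replace:
  "finite S \<Longrightarrow> v \<in> S \<Longrightarrow> w \<notin> S - {v} \<Longrightarrow> (\<Sum>u\<in>insert w (S - {v}). u) + v = (\<Sum>u\<in>S. u) + w"
  by (simp add: sum.remove add_ac)

definition set_move :: "('a \<Rightarrow> real) \<Rightarrow> ('a \<Rightarrow> 'a) \<Rightarrow> ('a set \<Rightarrow> real) \<Rightarrow> 'a set \<Rightarrow> real"
  where "set_move c f G S = (\<Sum>v\<in>S. if f v \<in> S then 0 else c v * G (insert (f v) (S - {v})))"

lemma linear_set_move: "linear (set_move c f)"
  by (rule linearI)
    (auto simp: set_move_def fun_eq_iff sum.distrib[symmetric] sum_distrib_left algebra_simps intro!: sum.cong)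

lemma set_move_nonzero:
  assumes "set_move c f G S \<noteq> 0"
  obtains v where "v \<in> S" "f v \<notin> S" "c v \<noteq> 0" "G (insert (f v) (S - {v})) \<noteq> 0"
proof -
  obtain v where "v \<in> S" "(if f v \<in> S then 0 else c v * G (insert (f v) (S - {v}))) \<noteq> 0"
    using sum.not_neutral_contains_not_neutral[OF assms[unfolded set_move_def]] by blast
  then show thesis
    using that by (simp split: if_splits)
qed

lemma set_move_insert:
  assumes "finite N" "x \<notin> N"
  shows "set_move c f G (insert x N) =
    (if f x \<in> insert x N then 0 else c x * G (insert (f x) N)) +
    (\<Sum>v\<in>N. if f v \<in> insert x N then 0 else c v * G (insert (f v) (insert x (N - {v}))))"
proof -
  have "set_move c f G (insert x N) =
      (if f x \<in> insert x N then 0 else c x * G (insert (f x) N)) +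
      (\<Sum>v\<in>N. if f v \<in> insert x N then 0 else c v * G (insert (f v) (insert x N - {v})))"
    using assms by (simp add: set_move_def)
  also have "(\<Sum>v\<in>N. if f v \<in> insert x N then 0 else c v * G (insert (f v) (insert x N - {v}))) =
      (\<Sum>v\<in>N. if f v \<in> insert x N then 0 else c v * G (insert (f v) (insert x (N - {v}))))"
    by (rule sum.cong[OF refl]) (use assms in \<open>auto simp: insert_Diff_if\<close>)
  finally show ?thesis .
qed

lemma set_move_set_move:
  assumes "finite S"
    and inv_f: "\<And>u. a u \<noteq> 0 \<Longrightarrow> g (f u) = u \<and> f u \<noteq> u"
    and inv_g: "\<And>w. b w \<noteq> 0 \<Longrightarrow> f (g w) = w"
  shows "set_move a f (set_move b g G) S =
    (\<Sum>u\<in>S. if f u \<in> S then 0 else a u * b (f u)) * G S +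
    (\<Sum>u\<in>S. \<Sum>w\<in>S - {u}. if f u \<in> S \<or> g w \<in> S \<or> g w = f u then 0
      else a u * b w * G (insert (f u) (insert (g w) (S - {u} - {w}))))"
proof -
  have "(if f u \<in> S then 0 else a u * set_move b g G (insert (f u) (S - {u}))) =
      (if f u \<in> S then 0 else a u * b (f u)) * G S +
      (\<Sum>w\<in>S - {u}. if f u \<in> S \<or> g w \<in> S \<or> g w = f u then 0
        else a u * b w * G (insert (f u) (insert (g w) (S - {u} - {w}))))"
    if u: "u \<in> S" for u
  proof (cases "f u \<in> S \<or> a u = 0")
    case False
    then have fu: "g (f u) = u" "f u \<noteq> u" "f u \<notin> S"
      using inv_f by auto
    let ?S' = "insert (f u) (S - {u})"
    have "a u * set_move b g G ?S' = a u * b (f u) * G S +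
        (\<Sum>w\<in>S - {u}. a u * (if g w \<in> ?S' then 0 else b w * G (insert (g w) (insert (f u) (S - {u} - {w})))))"
      using \<open>finite S\<close> fu u
      by (simp add: set_move_insert sum_distrib_left distrib_left insert_absorb)
    also have "\<dots> = a u * b (f u) * G S +
        (\<Sum>w\<in>S - {u}. if f u \<in> S \<or> g w \<in> S \<or> g w = f u then 0
          else a u * b w * G (insert (f u) (insert (g w) (S - {u} - {w}))))"
    proof (rule arg_cong[where f = "(+) _"], rule sum.cong[OF refl])
      fix w assume "w \<in> S - {u}"
      then show "a u * (if g w \<in> ?S' then 0 else b w * G (insert (g w) (insert (f u) (S - {u} - {w})))) =
          (if f u \<in> S \<or> g w \<in> S \<or> g w = f u then 0
            else a u * b w * G (insert (f u) (insert (g w) (S - {u} - {w}))))"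
        using inv_g[of w] fu by (cases "b w = 0") (auto simp: insert_commute)
    qed
    finally show ?thesis
      using fu by simp
  next
    case True
    then show ?thesis
      by (auto cong: if_cong)
  qed
  then show ?thesis
    unfolding set_move_def[of a] by (simp add: sum.distrib sum_distrib_right cong: sum.cong)
qed

lemma set_move_commutator:
  assumes "\<And>u. a u \<noteq> 0 \<Longrightarrow> g (f u) = u \<and> f u \<noteq> u" and "\<And>w. b w \<noteq> 0 \<Longrightarrow> f (g w) = w \<and> g w \<noteq> w"
  shows "set_move a f (set_move b g G) S - set_move b g (set_move a f G) S =
    (\<Sum>u\<in>S. a u * b (f u) - b u * a (g u)) * G S"
proof (cases "finite S")
  case False
  then show ?thesis
    by (simp add: set_move_def)
next
  case True
  let ?\<Phi> = "\<lambda>u w. if f u \<in> S \<or> g w \<in> S \<or> g w = f u then 0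
    else a u * b w * G (insert (f u) (insert (g w) (S - {u} - {w})))"
  have "(\<Sum>w\<in>S. \<Sum>u\<in>S - {w}. if g w \<in> S \<or> f u \<in> S \<or> f u = g w then 0
        else b w * a u * G (insert (g w) (insert (f u) (S - {w} - {u})))) =
      (\<Sum>w\<in>S. \<Sum>u\<in>S - {w}. ?\<Phi> u w)"
    by (intro sum.cong refl) (auto simp: insert_commute Diff_insert2[symmetric] mult.commute)
  moreover have "(\<Sum>u\<in>S. if f u \<in> S then 0 else a u * b (f u)) - (\<Sum>w\<in>S. if g w \<in> S then 0 else b w * a (g w)) =
      (\<Sum>u\<in>S. a u * b (f u) - b u * a (g u))"
    using True assms by (intro sum_unmatched_diff) auto
  ultimately show ?thesis
    using set_move_set_move[of S a g f b G] set_move_set_move[of S b f g a G] True assms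
      sum_offdiag_swap[OF True, of ?\<Phi>]
    by (simp add: left_diff_distrib[symmetric])
qed

section \<open>The sl2 action on vector partitions\<close>

definition shift_left :: "nat \<times> nat \<Rightarrow> nat \<times> nat"
  where "shift_left v = (fst v - 1, snd v + 1)"

definition shift_right :: "nat \<times> nat \<Rightarrow> nat \<times> nat"
  where "shift_right v = (fst v + 1, snd v - 1)"

definition raise_coeff :: "nat \<times> nat \<Rightarrow> real"
  where "raise_coeff v = (if fst v = 0 then 0 else real (snd v + 1))"

definition lower_coeff :: "nat \<times> nat \<Rightarrow> real"
  where "lower_coeff v = (if snd v = 0 then 0 else real (fst v + 1))"

abbreviation raise_mset :: "((nat \<times> nat) multiset \<Rightarrow> real) \<Rightarrow> (nat \<times> nat) multiset \<Rightarrow> real"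
  where "raise_mset \<equiv> mset_move raise_coeff shift_left"

abbreviation lower_mset :: "((nat \<times> nat) multiset \<Rightarrow> real) \<Rightarrow> (nat \<times> nat) multiset \<Rightarrow> real"
  where "lower_mset \<equiv> mset_move lower_coeff shift_right"

abbreviation raise_set :: "((nat \<times> nat) set \<Rightarrow> real) \<Rightarrow> (nat \<times> nat) set \<Rightarrow> real"
  where "raise_set \<equiv> set_move raise_coeff shift_left"

abbreviation lower_set :: "((nat \<times> nat) set \<Rightarrow> real) \<Rightarrow> (nat \<times> nat) set \<Rightarrow> real"
  where "lower_set \<equiv> set_move lower_coeff shift_right"

definition weight :: "nat \<times> nat \<Rightarrow> int"
  where "weight x = int (fst x) - int (snd x)"

definition degree :: "nat \<times> nat \<Rightarrow> int"
  where "degree x = int (fst x) + int (snd x)"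

lemma shift_right_shift_left: "raise_coeff v \<noteq> 0 \<Longrightarrow> shift_right (shift_left v) = v \<and> shift_left v \<noteq> v"
  by (cases v) (auto simp: raise_coeff_def shift_left_def shift_right_def split: if_split_asm)

lemma shift_left_shift_right: "lower_coeff v \<noteq> 0 \<Longrightarrow> shift_left (shift_right v) = v \<and> shift_right v \<noteq> v"
  by (cases v) (auto simp: lower_coeff_def shift_left_def shift_right_def split: if_split_asm)

lemma raise_lower_coeff_diff:
  "raise_coeff v * lower_coeff (shift_left v) - lower_coeff v * raise_coeff (shift_right v) = of_int (weight v)"
  by (cases v) (auto simp: raise_coeff_def lower_coeff_def shift_left_def shift_right_def weight_def algebra_simps)

lemma weight_add: "weight (x + y) = weight x + weight y"
  and degree_add: "degree (x + y) = degree x + degree y"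
  by (simp_all add: weight_def degree_def)

lemma weight_le_degree: "weight x \<le> degree x"
  by (simp add: weight_def degree_def)

lemma weight_degree_shift_left:
  "raise_coeff v \<noteq> 0 \<Longrightarrow> weight (shift_left v) = weight v - 2 \<and> degree (shift_left v) = degree v"
  by (cases v) (auto simp: raise_coeff_def shift_left_def weight_def degree_def split: if_split_asm)

lemma of_int_weight_sum_mset: "of_int (weight (\<Sum>\<^sub>#M)) = (\<Sum>v\<in>#M. of_int (weight v))"
  by (induction M) (simp_all add: weight_add weight_def)

lemma vsum_mset_eq_sum_mset: "vsum_mset M = \<Sum>\<^sub># M"
  by (induction M) (simp_all add: vsum_mset_def zero_prod_def prod_eq_iff)

lemma raise_lower_mset_commutator:
  "raise_mset (lower_mset G) - lower_mset (raise_mset G) = (\<lambda>M. of_int (weight (\<Sum>\<^sub>#M)) * G M)"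
proof
  fix M
  show "(raise_mset (lower_mset G) - lower_mset (raise_mset G)) M = of_int (weight (\<Sum>\<^sub>#M)) * G M"
    using mset_move_commutator[of raise_coeff shift_right shift_left lower_coeff G M]
    by (simp add: shift_right_shift_left shift_left_shift_right raise_lower_coeff_diff of_int_weight_sum_mset)
qed

lemma raise_mset_weight:
  assumes "raise_mset G M \<noteq> 0"
  shows "\<exists>M'. G M' \<noteq> 0 \<and> weight (\<Sum>\<^sub>#M) = weight (\<Sum>\<^sub>#M') + 2 \<and> degree (\<Sum>\<^sub>#M) = degree (\<Sum>\<^sub>#M')"
proof -
  obtain v where v: "v \<in># M" "raise_coeff v \<noteq> 0" and G: "G (add_mset (shift_left v) (M - {#v#})) \<noteq> 0"
    using mset_move_nonzero[OF assms] .
  let ?M' = "add_mset (shift_left v) (M - {#v#})"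
  have "\<Sum>\<^sub>#?M' + v = \<Sum>\<^sub># M + shift_left v"
    using sum_mset_replace[OF v(1)] .
  then have "weight (\<Sum>\<^sub>#?M') + weight v = weight (\<Sum>\<^sub>#M) + weight (shift_left v)"
    "degree (\<Sum>\<^sub>#?M') + degree v = degree (\<Sum>\<^sub>#M) + degree (shift_left v)"
    by (metis weight_add, metis degree_add)
  then show ?thesis
    using G weight_degree_shift_left[OF v(2)] by auto
qed

lemma lower_mset_injective:
  assumes support: "\<And>M. G M \<noteq> 0 \<Longrightarrow> \<Sum>\<^sub>#M = y" and "snd y < fst y"
    and lower: "lower_mset G = 0"
  shows "G = 0"
proof (rule lowering_injective_on_positive_weight[OF linear_mset_move linear_mset_move
      raise_lower_mset_commutator raise_mset_weight weight_le_degree])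
  show "weight (\<Sum>\<^sub>#M) = weight y \<and> degree (\<Sum>\<^sub>#M) = degree y" if "G M \<noteq> 0" for M
    using support[OF that] by simp
  show "0 < weight y"
    using \<open>snd y < fst y\<close> by (simp add: weight_def)
qed (assumption, rule lower)

lemma of_int_weight_sum: "of_int (weight (\<Sum>v\<in>S. v)) = (\<Sum>v\<in>S. of_int (weight v))"
  by (induction S rule: infinite_finite_induct) (simp_all add: weight_add weight_def)

lemma vsum_set_eq_sum: "vsum_set S = (\<Sum>v\<in>S. v)"
  by (simp add: vsum_set_def flip: sum_prod)

lemma raise_lower_set_commutator:
  "raise_set (lower_set G) - lower_set (raise_set G) = (\<lambda>S. of_int (weight (\<Sum>v\<in>S. v)) * G S)"
proof
  fix S
  show "(raise_set (lower_set G) - lower_set (raise_set G)) S = of_int (weight (\<Sum>v\<in>S. v)) * G S"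
    using set_move_commutator[of raise_coeff shift_right shift_left lower_coeff G S]
    by (simp add: shift_right_shift_left shift_left_shift_right raise_lower_coeff_diff of_int_weight_sum)
qed

lemma raise_set_weight:
  assumes "raise_set G S \<noteq> 0"
  shows "\<exists>S'. G S' \<noteq> 0 \<and> weight (\<Sum>v\<in>S. v) = weight (\<Sum>v\<in>S'. v) + 2 \<and>
    degree (\<Sum>v\<in>S. v) = degree (\<Sum>v\<in>S'. v)"
proof -
  have "finite S"
    using assms sum.infinite unfolding set_move_def by blast
  obtain v where v: "v \<in> S" "shift_left v \<notin> S" "raise_coeff v \<noteq> 0"
    and G: "G (insert (shift_left v) (S - {v})) \<noteq> 0"
    using set_move_nonzero[OF assms] .
  let ?S' = "insert (shift_left v) (S - {v})"
  have "(\<Sum>u\<in>?S'. u) + v = (\<Sum>u\<in>S. u) + shift_left v"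
    using sum_replace \<open>finite S\<close> v by blast
  then have "weight (\<Sum>u\<in>?S'. u) + weight v = weight (\<Sum>u\<in>S. u) + weight (shift_left v)"
    "degree (\<Sum>u\<in>?S'. u) + degree v = degree (\<Sum>u\<in>S. u) + degree (shift_left v)"
    by (metis weight_add, metis degree_add)
  then show ?thesis
    using G weight_degree_shift_left[OF v(3)] by auto
qed

lemma lower_set_injective:
  assumes support: "\<And>S. G S \<noteq> 0 \<Longrightarrow> (\<Sum>v\<in>S. v) = y" and "snd y < fst y"
    and lower: "lower_set G = 0"
  shows "G = 0"
proof (rule lowering_injective_on_positive_weight[OF linear_set_move linear_set_move
      raise_lower_set_commutator raise_set_weight weight_le_degree])
  show "weight (\<Sum>v\<in>S. v) = weight y \<and> degree (\<Sum>v\<in>S. v) = degree y" if "G S \<noteq> 0" for S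
    using support[OF that] by simp
  show "0 < weight y"
    using \<open>snd y < fst y\<close> by (simp add: weight_def)
qed (assumption, rule lower)

section \<open>Counting vector partitions\<close>

definition vector_partitions :: "nat \<Rightarrow> nat \<times> nat \<Rightarrow> (nat \<times> nat) multiset set"
  where "vector_partitions k x = {M. (0, 0) \<notin># M \<and> vsum_mset M = x \<and> size M \<le> k}"

definition distinct_vector_partitions :: "nat \<Rightarrow> nat \<times> nat \<Rightarrow> (nat \<times> nat) set set"
  where "distinct_vector_partitions k x =
    {S. finite S \<and> (0, 0) \<notin> S \<and> vsum_set S = x \<and> (card S = k \<or> card S + 1 = k)}"

lemma finite_vector_partitions: "finite (vector_partitions k x)"
proof (rule finite_subset)
  let ?X = "{0..fst x} \<times> {0..snd x}"
  have "v \<in> ?X" if "v \<in># M" "vsum_mset M = x" for v M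
    using that sum_mset.remove[OF that(1)] by (auto simp: vsum_mset_eq_sum_mset mem_Times_iff)
  then show "vector_partitions k x \<subseteq> (\<Union>j\<le>k. multisets_of_size ?X j)"
    by (fastforce simp: vector_partitions_def multisets_of_size_def)
qed auto

lemma finite_distinct_vector_partitions: "finite (distinct_vector_partitions k x)"
proof (rule finite_subset)
  let ?X = "{0..fst x} \<times> {0..snd x}"
  have "v \<in> ?X" if "finite S" "v \<in> S" "vsum_set S = x" for v S
    using that sum.remove[OF that(1,2), of id] by (auto simp: vsum_set_eq_sum mem_Times_iff)
  then show "distinct_vector_partitions k x \<subseteq> Pow ?X"
    by (auto simp: distinct_vector_partitions_def)
qed auto

lemma lower_mset_maps_partitions:
  assumes "{M. G M \<noteq> 0} \<subseteq> vector_partitions k (a + 1, b)"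
  shows "{M. lower_mset G M \<noteq> 0} \<subseteq> vector_partitions k (a, b + 1)"
proof
  fix M assume "M \<in> {M. lower_mset G M \<noteq> 0}"
  then obtain v where v: "v \<in># M" "lower_coeff v \<noteq> 0"
    and "G (add_mset (shift_right v) (M - {#v#})) \<noteq> 0"
    using mset_move_nonzero by blast
  then have M': "add_mset (shift_right v) (M - {#v#}) \<in> vector_partitions k (a + 1, b)"
    using assms by blast
  have "0 < snd v"
    using v(2) by (simp add: lower_coeff_def split: if_split_asm)
  have "(0, 0) \<notin># M"
  proof
    assume "(0, 0) \<in># M"
    moreover have "v \<noteq> (0, 0)"
      using \<open>0 < snd v\<close> by auto
    ultimately have "(0, 0) \<in># M - {#v#}"
      by (simp add: in_diff_count)
    then show False
      using M' by (simp add: vector_partitions_def)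
  qed
  moreover have "size (add_mset (shift_right v) (M - {#v#})) = size M"
    using v(1) by (metis insert_DiffM size_add_mset)
  then have "size M \<le> k"
    using M' by (simp add: vector_partitions_def)
  moreover have "\<Sum>\<^sub>#(add_mset (shift_right v) (M - {#v#})) + v = \<Sum>\<^sub>#M + shift_right v"
    using sum_mset_replace[OF v(1)] .
  then have "vsum_mset M = (a, b + 1)"
    using M' \<open>0 < snd v\<close>
    by (auto simp: vector_partitions_def vsum_mset_eq_sum_mset shift_right_def prod_eq_iff)
  ultimately show "M \<in> vector_partitions k (a, b + 1)"
    by (simp add: vector_partitions_def)
qed

lemma lower_set_maps_partitions:
  assumes "{S. G S \<noteq> 0} \<subseteq> distinct_vector_partitions k (a + 1, b)"
  shows "{S. lower_set G S \<noteq> 0} \<subseteq> distinct_vector_partitions k (a, b + 1)"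
proof
  fix S assume "S \<in> {S. lower_set G S \<noteq> 0}"
  then have "finite S" and "lower_set G S \<noteq> 0"
    using sum.infinite unfolding set_move_def by blast+
  then obtain v where v: "v \<in> S" "shift_right v \<notin> S" "lower_coeff v \<noteq> 0"
    and "G (insert (shift_right v) (S - {v})) \<noteq> 0"
    using set_move_nonzero by blast
  then have S': "insert (shift_right v) (S - {v}) \<in> distinct_vector_partitions k (a + 1, b)"
    using assms by blast
  have "0 < snd v"
    using v(3) by (simp add: lower_coeff_def split: if_split_asm)
  have "(0, 0) \<notin> S"
    using S' \<open>0 < snd v\<close> by (auto simp: distinct_vector_partitions_def)
  moreover have "card (insert (shift_right v) (S - {v})) = card S"
  proof -
    have "card (insert (shift_right v) (S - {v})) = Suc (card (S - {v}))"
      using \<open>finite S\<close> v by (intro card_insert_disjoint) auto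
    then show ?thesis
      using card_Suc_Diff1[OF \<open>finite S\<close> v(1)] by simp
  qed
  moreover have "(\<Sum>u\<in>insert (shift_right v) (S - {v}). u) + v = (\<Sum>u\<in>S. u) + shift_right v"
    using sum_replace \<open>finite S\<close> v by blast
  then have "vsum_set S = (a, b + 1)"
    using S' \<open>0 < snd v\<close>
    by (auto simp: distinct_vector_partitions_def vsum_set_eq_sum shift_right_def prod_eq_iff)
  ultimately show "S \<in> distinct_vector_partitions k (a, b + 1)"
    using S' \<open>finite S\<close> by (simp add: distinct_vector_partitions_def)
qed

lemma p_shift_le:
  assumes "b \<le> a"
  shows "p k (a + 1, b) \<le> p k (a, b + 1)"
proof -
  have "card (vector_partitions k (a + 1, b)) \<le> card (vector_partitions k (a, b + 1))"
  proof (rule card_le_card_if_linear_injective[OF finite_vector_partitions finite_vector_partitions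
        linear_mset_move lower_mset_maps_partitions])
    fix G :: "(nat \<times> nat) multiset \<Rightarrow> real"
    assume support: "{M. G M \<noteq> 0} \<subseteq> vector_partitions k (a + 1, b)"
      and "lower_mset G = 0"
    show "G = 0"
    proof (rule lower_mset_injective)
      show "\<Sum>\<^sub>#M = (a + 1, b)" if "G M \<noteq> 0" for M
        using support that by (auto simp: vector_partitions_def vsum_mset_eq_sum_mset)
      show "snd (a + 1, b) < fst (a + 1, b)"
        using assms by simp
    qed fact
  qed
  then show ?thesis
    by (simp add: p_def vector_partitions_def)
qed

lemma q_shift_le:
  assumes "b \<le> a"
  shows "q k (a + 1, b) \<le> q k (a, b + 1)"
proof -
  have "card (distinct_vector_partitions k (a + 1, b)) \<le> card (distinct_vector_partitions k (a, b + 1))"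
  proof (rule card_le_card_if_linear_injective[OF finite_distinct_vector_partitions
        finite_distinct_vector_partitions linear_set_move lower_set_maps_partitions])
    fix G :: "(nat \<times> nat) set \<Rightarrow> real"
    assume support: "{S. G S \<noteq> 0} \<subseteq> distinct_vector_partitions k (a + 1, b)"
      and "lower_set G = 0"
    show "G = 0"
    proof (rule lower_set_injective)
      show "(\<Sum>v\<in>S. v) = (a + 1, b)" if "G S \<noteq> 0" for S
        using support that by (auto simp: distinct_vector_partitions_def vsum_set_eq_sum)
      show "snd (a + 1, b) < fst (a + 1, b)"
        using assms by simp
    qed fact
  qed
  then show ?thesis
    by (simp add: q_def distinct_vector_partitions_def)
qed

theorem corollary6:
  fixes x1 x2 n :: nat
  assumes "x1 \<ge> x2" and "x2 \<ge> 1"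
  shows "p n (x1, x2) \<ge> p n (x1 + 1, x2 - 1) \<and> q n (x1, x2) \<ge> q n (x1 + 1, x2 - 1)"
proof -
  have "x2 - 1 \<le> x1" and x2: "x2 - 1 + 1 = x2"
    using assms by simp_all
  then show ?thesis
    using p_shift_le[of "x2 - 1" x1 n] q_shift_le[of "x2 - 1" x1 n] by simp
qed

end
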